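(* Let $G$ and $H$ be finitely generated groups and let $f:G\to H$ be a surjective homomorphism with finite kernel. For every generating $n$-tuple $S=(g_1,\dots,g_n)$ of $G$, if $\Gamma_n(G,S)$ has exponential growth then $\Gamma_n(H,f(S))$ has exponential growth, where $f(S)=(f(g_1),\dots,f(g_n))$. In particular, if $G$ has exponential Nielsen growth, then $H$ has exponential Nielsen growth.
   Context: For a group $G$, a generating $n$-tuple is $(g_1,\dots,g_n)\in G^n$ with $G=\langle g_1,\dots,g_n\rangle$. The product replacement graph $\Gamma_n(G)$ has vertices the generating $n$-tuples, with edges from $(g_1,\dots,g_n)$ to each tuple obtained by replacing $g_j$ by $g_jg_i^{\pm1}$ or $g_i^{\pm1}g_j$, for every ordered pair $i\neq j$. For $S\in\Gamma_n(G)$, $\Gamma_n(G,S)$ is the connected component of $\Gamma_n(G)$ containing $S$ (more generally $\Gamma_{n+m}(G,S)$ is the component containing $S$ padded with $m$ identity entries). For a graph $\Gamma$ and vertex $v$, $B_\Gamma(v,r)$ is the set of vertices at path distance at most $r$ from $v$; a graph has exponential growth from $v$ if $|B_\Gamma(v,r)|\ge\alpha^r$ for some $\alpha>1$ and all sufficiently large $r$; a connected graph has exponential growth if it has exponential growth from some (equivalently every) vertex. $G$ has exponential Nielsen growth if $\Gamma_n(G,S)$ has exponential growth for some $n$ and some generating $n$-tuple $S$. *)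

theory Defs
  imports Complex_Main "HOL-Algebra.Algebra"
begin

definition fin_gen_group :: "('a, 'm) monoid_scheme \<Rightarrow> bool" where
  "fin_gen_group G \<longleftrightarrow> (\<exists>A. finite A \<and> A \<subseteq> carrier G \<and> generate G A = carrier G)"

definition gen_tuple :: "('a, 'm) monoid_scheme \<Rightarrow> nat \<Rightarrow> 'a list \<Rightarrow> bool" where
  "gen_tuple G n xs \<longleftrightarrow> length xs = n \<and> set xs \<subseteq> carrier G \<and> generate G (set xs) = carrier G"

definition nielsen_move :: "('a, 'm) monoid_scheme \<Rightarrow> 'a list \<Rightarrow> 'a list \<Rightarrow> bool" where
  "nielsen_move G xs ys \<longleftrightarrow>
     (\<exists>i j. i < length xs \<and> j < length xs \<and> i \<noteq> j \<and>
        (ys = xs[j := xs!j \<otimes>\<^bsub>G\<^esub> xs!i] \<or>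
         ys = xs[j := xs!j \<otimes>\<^bsub>G\<^esub> inv\<^bsub>G\<^esub> (xs!i)] \<or>
         ys = xs[j := xs!i \<otimes>\<^bsub>G\<^esub> xs!j] \<or>
         ys = xs[j := inv\<^bsub>G\<^esub> (xs!i) \<otimes>\<^bsub>G\<^esub> xs!j]))"

definition pr_edge :: "('a, 'm) monoid_scheme \<Rightarrow> nat \<Rightarrow> ('a list \<times> 'a list) set" where
  "pr_edge G n = {(xs, ys). gen_tuple G n xs \<and> gen_tuple G n ys \<and> nielsen_move G xs ys}"

definition pr_component :: "('a, 'm) monoid_scheme \<Rightarrow> nat \<Rightarrow> 'a list \<Rightarrow> 'a list set" where
  "pr_component G n S = {T. (S, T) \<in> (pr_edge G n)\<^sup>*}"

definition pr_ball :: "('a, 'm) monoid_scheme \<Rightarrow> nat \<Rightarrow> 'a list \<Rightarrow> nat \<Rightarrow> 'a list set" where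
  "pr_ball G n v r = {w. \<exists>k\<le>r. (v, w) \<in> (pr_edge G n) ^^ k}"

definition exp_growth_from :: "('a, 'm) monoid_scheme \<Rightarrow> nat \<Rightarrow> 'a list \<Rightarrow> bool" where
  "exp_growth_from G n v \<longleftrightarrow>
     (\<exists>\<alpha>::real. \<alpha> > 1 \<and> (\<exists>N. \<forall>r\<ge>N. \<alpha> ^ r \<le> real (card (pr_ball G n v r))))"

text \<open>Gamma_n(G,S) has exponential growth (from some, equivalently every, vertex).\<close>
definition pr_exp_growth :: "('a, 'm) monoid_scheme \<Rightarrow> nat \<Rightarrow> 'a list \<Rightarrow> bool" where
  "pr_exp_growth G n S \<longleftrightarrow> (\<exists>v \<in> pr_component G n S. exp_growth_from G n v)"

definition exp_nielsen_growth :: "('a, 'm) monoid_scheme \<Rightarrow> bool" where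
  "exp_nielsen_growth G \<longleftrightarrow> (\<exists>n S. gen_tuple G n S \<and> pr_exp_growth G n S)"

end

theory Submission imports Defs begin

text \<open>Applying \<open>f\<close> entrywise sends Nielsen moves to Nielsen moves and generating tuples to
generating tuples, so it maps the \<open>r\<close>-ball of \<open>\<Gamma>\<^sub>n(G,S)\<close> around \<open>v\<close> into the \<open>r\<close>-ball of
\<open>\<Gamma>\<^sub>n(H,f(S))\<close> around \<open>f(v)\<close>. Every \<open>n\<close>-tuple over \<open>H\<close> has at most \<open>|ker f|\<^sup>n\<close> preimages,
so the balls in \<open>H\<close> are at least a constant fraction of those in \<open>G\<close>, and an exponential
lower bound survives division by a constant (at the price of taking a square root of the base).\<close>

lemma finite_pr_edge_Image: "finite (pr_edge G n `` {xs})"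
proof -
  let ?moves = "\<Union>i<length xs. \<Union>j<length xs.
     {xs[j := xs!j \<otimes>\<^bsub>G\<^esub> xs!i], xs[j := xs!j \<otimes>\<^bsub>G\<^esub> inv\<^bsub>G\<^esub> (xs!i)],
      xs[j := xs!i \<otimes>\<^bsub>G\<^esub> xs!j], xs[j := inv\<^bsub>G\<^esub> (xs!i) \<otimes>\<^bsub>G\<^esub> xs!j]}"
  have "pr_edge G n `` {xs} \<subseteq> ?moves"
    unfolding pr_edge_def nielsen_move_def by blast
  then show ?thesis by (rule finite_subset) auto
qed

lemma finite_relpow_pr_edge_Image: "finite ((pr_edge G n ^^ k) `` {xs})"
proof (induction k)
  case (Suc k)
  have "(pr_edge G n ^^ Suc k) `` {xs} = pr_edge G n `` ((pr_edge G n ^^ k) `` {xs})"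
    by (simp add: relcomp_Image)
  also have "\<dots> = (\<Union>ys\<in>(pr_edge G n ^^ k) `` {xs}. pr_edge G n `` {ys})"
    by (rule Image_eq_UN)
  finally show ?case using Suc by (simp add: finite_pr_edge_Image)
qed simp

lemma finite_pr_ball: "finite (pr_ball G n v r)"
proof -
  have "pr_ball G n v r = (\<Union>k\<le>r. (pr_edge G n ^^ k) `` {v})"
    unfolding pr_ball_def by auto
  then show ?thesis by (simp only:) (intro finite_UN_I finite_atMost finite_relpow_pr_edge_Image)
qed

lemma gen_tuple_relpow_pr_edge:
  assumes "(v, w) \<in> pr_edge G n ^^ k" and "gen_tuple G n v"
  shows "gen_tuple G n w"
proof (cases k)
  case (Suc m)
  with assms(1) obtain z where "(z, w) \<in> pr_edge G n" by (meson relpow_Suc_E)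
  then show ?thesis unfolding pr_edge_def by simp
qed (use assms in simp)

lemma gen_tuple_pr_component:
  assumes "w \<in> pr_component G n S" and "gen_tuple G n S"
  shows "gen_tuple G n w"
  using assms gen_tuple_relpow_pr_edge unfolding pr_component_def by (metis mem_Collect_eq rtrancl_power)

lemma gen_tuple_pr_ball:
  assumes "w \<in> pr_ball G n v r" and "gen_tuple G n v"
  shows "gen_tuple G n w"
  using assms gen_tuple_relpow_pr_edge unfolding pr_ball_def by blast

lemma card_le_mult_card_if_fibres_le:
  assumes "finite B" and "f ` A \<subseteq> B"
    and "\<And>y. y \<in> B \<Longrightarrow> finite {x \<in> A. f x = y} \<and> card {x \<in> A. f x = y} \<le> c"
  shows "card A \<le> c * card B"
proof -
  have A: "A = (\<Union>y\<in>B. {x \<in> A. f x = y})" using assms(2) by blast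
  have "card A \<le> (\<Sum>y\<in>B. card {x \<in> A. f x = y})"
    by (subst A) (rule card_UN_le[OF assms(1)])
  also have "\<dots> \<le> (\<Sum>y\<in>B. c)" using assms(3) by (intro sum_mono) blast
  finally show ?thesis by (simp add: mult.commute)
qed

lemma exp_lower_bound_div_const:
  fixes a b :: "nat \<Rightarrow> real" and \<alpha> c :: real
  assumes "\<alpha> > 1" and "\<forall>r\<ge>N. \<alpha> ^ r \<le> a r" and "\<And>r. a r \<le> c * b r" and "c \<ge> 0"
  shows "\<exists>\<beta>>1. \<exists>N. \<forall>r\<ge>N. \<beta> ^ r \<le> b r"
proof -
  define \<beta> where "\<beta> = sqrt \<alpha>"
  have \<beta>: "\<beta> > 1" "\<beta> * \<beta> = \<alpha>" using assms(1) by (simp_all add: \<beta>_def)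
  obtain M where M: "c < \<beta> ^ M" using real_arch_pow[OF \<beta>(1)] by blast
  have "\<beta> ^ r \<le> b r" if r: "r \<ge> max N M" for r
  proof -
    have "\<beta> ^ M \<le> \<beta> ^ r" using \<beta>(1) r by (intro power_increasing) auto
    with M have "c \<le> \<beta> ^ r" by linarith
    have "\<beta> ^ r * \<beta> ^ r = \<alpha> ^ r" using \<beta>(2) by (metis power_mult_distrib)
    also have "\<dots> \<le> a r" using assms(2) r by simp
    also have "\<dots> \<le> c * b r" by (rule assms(3))
    finally have le: "\<beta> ^ r * \<beta> ^ r \<le> c * b r" .
    moreover have "0 < \<beta> ^ r * \<beta> ^ r" using \<beta>(1) by simp
    ultimately have "0 < c * b r" by linarith
    then have "b r \<ge> 0" using assms(4) by (simp add: zero_less_mult_iff)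
    with \<open>c \<le> \<beta> ^ r\<close> have "c * b r \<le> \<beta> ^ r * b r" by (rule mult_right_mono)
    with le have "\<beta> ^ r * \<beta> ^ r \<le> \<beta> ^ r * b r" by linarith
    moreover have "0 < \<beta> ^ r" using \<beta>(1) by simp
    ultimately show ?thesis by (simp add: mult_le_cancel_left_pos)
  qed
  then show ?thesis using \<beta>(1) by blast
qed

context group_hom
begin

lemma nielsen_move_map:
  assumes "set xs \<subseteq> carrier G" and "nielsen_move G xs ys"
  shows "nielsen_move H (map h xs) (map h ys)"
proof -
  from assms(2) obtain i j where ij: "i < length xs" "j < length xs" "i \<noteq> j"
    and ys: "ys = xs[j := xs!j \<otimes> xs!i] \<or> ys = xs[j := xs!j \<otimes> inv (xs!i)] \<or>
             ys = xs[j := xs!i \<otimes> xs!j] \<or> ys = xs[j := inv (xs!i) \<otimes> xs!j]"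
    unfolding nielsen_move_def by blast
  have "xs!i \<in> carrier G" "xs!j \<in> carrier G" using ij assms(1) nth_mem by blast+
  with ij ys show ?thesis
    unfolding nielsen_move_def by (intro exI[of _ i] exI[of _ j]) (auto simp: map_update)
qed

lemma gen_tuple_map:
  assumes "h ` carrier G = carrier H" and "gen_tuple G n xs"
  shows "gen_tuple H n (map h xs)"
  using assms generate_img[of "set xs"] unfolding gen_tuple_def by auto

lemma pr_edge_map:
  assumes "h ` carrier G = carrier H" and "(xs, ys) \<in> pr_edge G n"
  shows "(map h xs, map h ys) \<in> pr_edge H n"
  using assms gen_tuple_map nielsen_move_map unfolding pr_edge_def gen_tuple_def by auto

lemma relpow_pr_edge_map:
  assumes "h ` carrier G = carrier H" and "(xs, ys) \<in> pr_edge G n ^^ k"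
  shows "(map h xs, map h ys) \<in> pr_edge H n ^^ k"
  using assms(2)
proof (induction k arbitrary: ys)
  case (Suc k)
  then obtain zs where "(xs, zs) \<in> pr_edge G n ^^ k" "(zs, ys) \<in> pr_edge G n" by auto
  then show ?case using Suc.IH pr_edge_map[OF assms(1)] by (meson relpow_Suc_I)
qed simp

lemma pr_component_map:
  assumes "h ` carrier G = carrier H" and "v \<in> pr_component G n S"
  shows "map h v \<in> pr_component H n (map h S)"
  using assms relpow_pr_edge_map unfolding pr_component_def by (metis mem_Collect_eq rtrancl_power)

lemma pr_ball_map:
  assumes "h ` carrier G = carrier H"
  shows "map h ` pr_ball G n v r \<subseteq> pr_ball H n (map h v) r"
  using relpow_pr_edge_map[OF assms] unfolding pr_ball_def by blast

lemma card_fibre_le: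
  assumes "finite (kernel G H h)"
  shows "finite {x \<in> carrier G. h x = y} \<and> card {x \<in> carrier G. h x = y} \<le> card (kernel G H h)"
proof (cases "\<exists>x0 \<in> carrier G. h x0 = y")
  case True
  then obtain x0 where x0: "x0 \<in> carrier G" "h x0 = y" by blast
  have "{x \<in> carrier G. h x = y} \<subseteq> (\<lambda>k. x0 \<otimes> k) ` kernel G H h"
  proof
    fix x assume x: "x \<in> {x \<in> carrier G. h x = y}"
    have "y \<in> carrier H" using x0 by auto
    then have "h (inv x0 \<otimes> x) = \<one>\<^bsub>H\<^esub>" using x x0 by simp
    then have "inv x0 \<otimes> x \<in> kernel G H h" using x x0 by (simp add: kernel_def)
    moreover have "x = x0 \<otimes> (inv x0 \<otimes> x)" using x x0 by (simp add: G.m_assoc[symmetric])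
    ultimately show "x \<in> (\<lambda>k. x0 \<otimes> k) ` kernel G H h" by blast
  qed
  moreover have "card ((\<lambda>k. x0 \<otimes> k) ` kernel G H h) \<le> card (kernel G H h)"
    using assms by (rule card_image_le)
  ultimately show ?thesis using assms by (meson card_mono finite_imageI finite_subset le_trans)
next
  case False
  then have "{x \<in> carrier G. h x = y} = {}" by blast
  then show ?thesis by (metis card.empty finite.emptyI le0)
qed

lemma card_list_fibre_le:
  assumes "finite (kernel G H h)"
  shows "finite {xs. set xs \<subseteq> carrier G \<and> map h xs = ys}
    \<and> card {xs. set xs \<subseteq> carrier G \<and> map h xs = ys} \<le> card (kernel G H h) ^ length ys"
proof (induction ys)
  case Nil
  have "{xs. set xs \<subseteq> carrier G \<and> map h xs = []} = {[]}" by auto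
  then show ?case by simp
next
  case (Cons y ys)
  let ?F = "{x \<in> carrier G. h x = y}" and ?Fs = "{xs. set xs \<subseteq> carrier G \<and> map h xs = ys}"
  have eq: "{xs. set xs \<subseteq> carrier G \<and> map h xs = y # ys} = (\<lambda>(x, xs). x # xs) ` (?F \<times> ?Fs)"
    by (auto simp: map_eq_Cons_conv)
  have F: "finite ?F" "card ?F \<le> card (kernel G H h)" using card_fibre_le[OF assms] by auto
  have Fs: "finite ?Fs" "card ?Fs \<le> card (kernel G H h) ^ length ys" using Cons by auto
  have "card ((\<lambda>(x, xs). x # xs) ` (?F \<times> ?Fs)) \<le> card ?F * card ?Fs"
    using card_image_le[of "?F \<times> ?Fs"] F(1) Fs(1) by (simp add: card_cartesian_product)
  also have "\<dots> \<le> card (kernel G H h) * card (kernel G H h) ^ length ys"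
    using F(2) Fs(2) by (rule mult_mono) auto
  finally show ?case using F(1) Fs(1) by (simp add: eq)
qed

lemma card_pr_ball_le:
  assumes "h ` carrier G = carrier H" and "finite (kernel G H h)" and "gen_tuple G n v"
  shows "card (pr_ball G n v r) \<le> card (kernel G H h) ^ n * card (pr_ball H n (map h v) r)"
proof (rule card_le_mult_card_if_fibres_le[OF finite_pr_ball pr_ball_map[OF assms(1)]])
  fix ys
  let ?A = "{xs \<in> pr_ball G n v r. map h xs = ys}"
    and ?F = "{xs. set xs \<subseteq> carrier G \<and> map h xs = ys}"
  show "finite ?A \<and> card ?A \<le> card (kernel G H h) ^ n"
  proof (cases "?A = {}")
    case False
    have gen: "gen_tuple G n xs" if "xs \<in> ?A" for xs
      using that assms(3) gen_tuple_pr_ball by blast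
    from False obtain xs where "xs \<in> ?A" by blast
    with gen have "length ys = n" unfolding gen_tuple_def by auto
    then have F: "finite ?F" "card ?F \<le> card (kernel G H h) ^ n"
      using card_list_fibre_le[OF assms(2), of ys] by auto
    have "?A \<subseteq> ?F" using gen unfolding gen_tuple_def by blast
    with F show ?thesis using card_mono[of ?F ?A] finite_subset[of ?A ?F] by linarith
  qed (simp only: card.empty finite.emptyI le0 simp_thms)
qed

end

theorem proposition3p6:
  fixes G :: "('a, 'm) monoid_scheme" and H :: "('b, 'n) monoid_scheme"
    and f :: "'a \<Rightarrow> 'b"
  assumes "group G" and "group H"
    and "fin_gen_group G" and "fin_gen_group H"
    and "f \<in> hom G H" and "f ` carrier G = carrier H"
    and "finite (kernel G H f)"
  shows "(\<forall>n S. gen_tuple G n S \<and> pr_exp_growth G n S \<longrightarrow> pr_exp_growth H n (map f S))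
         \<and> (exp_nielsen_growth G \<longrightarrow> exp_nielsen_growth H)"
proof -
  interpret group_hom G H f
    using assms(1,2,5) by (simp add: group_hom_def group_hom_axioms_def)
  have growth: "pr_exp_growth H n (map f S)"
    if S: "gen_tuple G n S" and "pr_exp_growth G n S" for n S
  proof -
    from that obtain v \<alpha> N where v: "v \<in> pr_component G n S" and "\<alpha> > 1"
      and "\<forall>r\<ge>N. \<alpha> ^ r \<le> real (card (pr_ball G n v r))"
      unfolding pr_exp_growth_def exp_growth_from_def by blast
    moreover have "real (card (pr_ball G n v r))
        \<le> real (card (kernel G H f) ^ n) * real (card (pr_ball H n (map f v) r))" for r
      using card_pr_ball_le[OF assms(6,7) gen_tuple_pr_component[OF v S]]
      by (metis of_nat_le_iff of_nat_mult)
    ultimately have "exp_growth_from H n (map f v)"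
      unfolding exp_growth_from_def by (intro exp_lower_bound_div_const) auto
    then show ?thesis
      using pr_component_map[OF assms(6) v] unfolding pr_exp_growth_def by blast
  qed
  then show ?thesis
    using gen_tuple_map[OF assms(6)] unfolding exp_nielsen_growth_def by blast
qed

end
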